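(* Let $S$ be a semidomain. The following are equivalent: (a) $S$ satisfies ACCP; (b) $S[x]$ satisfies ACCP; (c) $S[x^{\pm1}]$ satisfies ACCP.
   Context: A semidomain is a subset $S$ of an integral domain $R$ containing $0$ and $1$ and closed under addition and multiplication. $S^*=S\setminus\{0\}$ is a monoid under multiplication. $S$ satisfies ACCP if every ascending chain of principal ideals $b_1S^*\subseteq b_2S^*\subseteq\cdots$ ($b_i\in S^*$) of the monoid $S^*$ eventually stabilizes. $S[x]$ (resp. $S[x^{\pm1}]$) is the semidomain of polynomials (resp. Laurent polynomials) in $R[x]$ (resp. $R[x^{\pm1}]$) with coefficients in $S$. *)

theory Defs
  imports "HOL-Computational_Algebra.Polynomial" "HOL-Computational_Algebra.Formal_Laurent_Series"
begin

definition semidomain :: "'a::idom set \<Rightarrow> bool" where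
  "semidomain S \<longleftrightarrow> 0 \<in> S \<and> 1 \<in> S \<and> (\<forall>a\<in>S. \<forall>b\<in>S. a + b \<in> S \<and> a * b \<in> S)"

definition pideal :: "'a::idom set \<Rightarrow> 'a \<Rightarrow> 'a set" where
  "pideal S b = {b * s | s. s \<in> S - {0}}"

definition ACCP :: "'a::idom set \<Rightarrow> bool" where
  "ACCP S \<longleftrightarrow> (\<forall>b :: nat \<Rightarrow> 'a. (\<forall>i. b i \<in> S - {0}) \<and> (\<forall>i. pideal S (b i) \<subseteq> pideal S (b (Suc i)))
      \<longrightarrow> (\<exists>N. \<forall>n\<ge>N. pideal S (b n) = pideal S (b N)))"

definition poly_semidomain :: "'a::idom set \<Rightarrow> 'a poly set" where
  "poly_semidomain S = {p. \<forall>n. coeff p n \<in> S}"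

definition laurent_semidomain :: "'a::idom set \<Rightarrow> 'a fls set" where
  "laurent_semidomain S = {f. finite {n. fls_nth f n \<noteq> 0} \<and> (\<forall>n. fls_nth f n \<in> S)}"

end

theory Submission
  imports Defs "HOL-Computational_Algebra.Polynomial_FPS"
begin

text \<open>
  (a) \<Longrightarrow> (b): in a divisibility chain of nonzero polynomials the degrees decrease and
  therefore stabilise, and the leading coefficients form a divisibility chain in \<open>S\<close>,
  which stabilises by ACCP. Once both have stabilised, consecutive quotients are
  constants whose inverse also lies in \<open>S\<close>.

  All other implications come from one observation: ACCP is inherited along a map
  of monoids that preserves and reflects divisibility. Constants embed \<open>S\<^sup>*\<close> into
  \<open>S[x]\<^sup>*\<close> and into \<open>S[x\<^sup>\<plusminus>\<^sup>1]\<^sup>*\<close> in this way (read off the constant coefficient of a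
  quotient), and writing a Laurent polynomial as \<open>x\<^sup>k p\<close> with \<open>p(0) \<noteq> 0\<close> maps
  \<open>S[x\<^sup>\<plusminus>\<^sup>1]\<^sup>*\<close> to \<open>S[x]\<^sup>*\<close> in this way, since powers of \<open>x\<close> are units of \<open>S[x\<^sup>\<plusminus>\<^sup>1]\<close>.
\<close>

subsection \<open>ACCP in multiplicative submonoids\<close>

definition mult_submonoid :: "'a::idom set \<Rightarrow> bool" where
  "mult_submonoid T \<longleftrightarrow> 1 \<in> T \<and> (\<forall>a\<in>T. \<forall>b\<in>T. a * b \<in> T)"

lemma semidomain_imp_mult_submonoid: "semidomain S \<Longrightarrow> mult_submonoid S"
  by (auto simp: semidomain_def mult_submonoid_def)

lemma pideal_iff: "x \<in> pideal T b \<longleftrightarrow> (\<exists>s\<in>T - {0}. x = b * s)"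
  by (auto simp: pideal_def)

lemma pideal_subset_iff:
  assumes "mult_submonoid T"
  shows "pideal T a \<subseteq> pideal T b \<longleftrightarrow> a \<in> pideal T b"
proof
  assume "pideal T a \<subseteq> pideal T b"
  moreover have "a \<in> pideal T a"
    using assms by (auto simp: pideal_iff mult_submonoid_def intro: bexI[of _ 1])
  ultimately show "a \<in> pideal T b" by blast
next
  assume "a \<in> pideal T b"
  then obtain t where t: "t \<in> T - {0}" "a = b * t" by (auto simp: pideal_iff)
  show "pideal T a \<subseteq> pideal T b"
  proof
    fix x assume "x \<in> pideal T a"
    then obtain s where s: "s \<in> T - {0}" "x = a * s" by (auto simp: pideal_iff)
    have "t * s \<in> T - {0}" using assms s t by (auto simp: mult_submonoid_def)
    moreover have "x = b * (t * s)" using s t by (simp add: mult.assoc)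
    ultimately show "x \<in> pideal T b" by (auto simp: pideal_iff)
  qed
qed

lemma pideal_chain_mono:
  assumes T: "mult_submonoid T" and chain: "\<forall>i. b i \<in> pideal T (b (Suc i))" and "m \<le> n"
  shows "pideal T (b m) \<subseteq> pideal T (b n)"
  by (rule lift_Suc_mono_le[of "\<lambda>i. pideal T (b i)", OF _ \<open>m \<le> n\<close>])
    (use chain in \<open>simp add: pideal_subset_iff[OF T]\<close>)

lemma ACCP_iff:
  assumes T: "mult_submonoid T"
  shows "ACCP T \<longleftrightarrow> (\<forall>b. (\<forall>i. b i \<in> T - {0}) \<and> (\<forall>i. b i \<in> pideal T (b (Suc i)))
                          \<longrightarrow> (\<exists>N. \<forall>n\<ge>N. b n \<in> pideal T (b N)))"
proof -
  have stable_iff: "pideal T (b n) = pideal T (b N) \<longleftrightarrow> b n \<in> pideal T (b N)"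
    if chain: "\<forall>i. b i \<in> pideal T (b (Suc i))" and "N \<le> n" for b N n
  proof -
    have "pideal T (b N) \<subseteq> pideal T (b n)" using pideal_chain_mono[OF T chain \<open>N \<le> n\<close>] .
    then show ?thesis using pideal_subset_iff[OF T] by blast
  qed
  show ?thesis
    unfolding ACCP_def pideal_subset_iff[OF T]
    by (intro iff_allI) (use stable_iff in blast)
qed

lemma ACCP_pullback:
  assumes T: "mult_submonoid T" and U: "mult_submonoid U" and "ACCP U"
    and maps: "\<And>a. a \<in> T - {0} \<Longrightarrow> \<phi> a \<in> U - {0}"
    and preserves: "\<And>a b. a \<in> T - {0} \<Longrightarrow> b \<in> T - {0} \<Longrightarrow> a \<in> pideal T b
                       \<Longrightarrow> \<phi> a \<in> pideal U (\<phi> b)"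
    and reflects: "\<And>a b. a \<in> T - {0} \<Longrightarrow> b \<in> T - {0} \<Longrightarrow> \<phi> a \<in> pideal U (\<phi> b)
                      \<Longrightarrow> a \<in> pideal T b"
  shows "ACCP T"
  unfolding ACCP_iff[OF T]
proof (intro allI impI)
  fix b assume b: "(\<forall>i. b i \<in> T - {0}) \<and> (\<forall>i. b i \<in> pideal T (b (Suc i)))"
  then have "(\<forall>i. \<phi> (b i) \<in> U - {0}) \<and> (\<forall>i. \<phi> (b i) \<in> pideal U (\<phi> (b (Suc i))))"
    using maps preserves by blast
  then obtain N where "\<forall>n\<ge>N. \<phi> (b n) \<in> pideal U (\<phi> (b N))"
    using \<open>ACCP U\<close> unfolding ACCP_iff[OF U] by (auto dest!: spec[of _ "\<lambda>i. \<phi> (b i)"])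
  then show "\<exists>N. \<forall>n\<ge>N. b n \<in> pideal T (b N)" using b reflects by blast
qed

subsection \<open>Polynomials\<close>

lemma sum_in_semidomain:
  assumes "semidomain S" "\<And>i. i \<in> A \<Longrightarrow> f i \<in> S"
  shows "sum f A \<in> S"
  using assms(2)
proof (induction A rule: infinite_finite_induct)
  case (insert x F)
  then show ?case using assms(1) by (simp add: semidomain_def)
qed (use assms(1) in \<open>simp_all add: semidomain_def\<close>)

lemma poly_semidomain_mult:
  assumes "semidomain S" "p \<in> poly_semidomain S" "q \<in> poly_semidomain S"
  shows "p * q \<in> poly_semidomain S"
  using assms(2,3) unfolding poly_semidomain_def
  by (auto simp: coeff_mult intro!: sum_in_semidomain[OF assms(1)])
    (use assms(1) in \<open>simp add: semidomain_def\<close>)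

lemma mult_submonoid_poly_semidomain: "semidomain S \<Longrightarrow> mult_submonoid (poly_semidomain S)"
  using poly_semidomain_mult[of S]
  by (auto simp: mult_submonoid_def poly_semidomain_def semidomain_def coeff_1)

lemma const_in_poly_semidomain: "semidomain S \<Longrightarrow> c \<in> S \<Longrightarrow> [:c:] \<in> poly_semidomain S"
  by (auto simp: poly_semidomain_def semidomain_def coeff_pCons split: nat.split)

lemma antimono_nat_eventually_const:
  fixes d :: "nat \<Rightarrow> nat"
  assumes "\<And>i. d (Suc i) \<le> d i"
  shows "\<exists>M. \<forall>n\<ge>M. d n = d M"
proof -
  obtain M where M: "\<forall>i. d M \<le> d i" using ex_has_least_nat[of "\<lambda>_. True" 0 d] by blast
  have "d n \<le> d M" if "M \<le> n" for n using lift_Suc_antimono_le[of d, OF assms that] .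
  then show ?thesis using M le_antisym by blast
qed

lemma eq_mult_const_if_degree_eq:
  fixes f h g :: "'a::idom poly"
  assumes f: "f = h * g" "f \<noteq> 0" and deg: "degree f = degree h"
    and lc: "lead_coeff h = lead_coeff f * t"
  shows "h = f * [:t:]"
proof -
  have "h \<noteq> 0" "g \<noteq> 0" using f by auto
  then have "degree g = 0" using f deg by (simp add: degree_mult_eq)
  then have g: "g = [:coeff g 0:]" by (rule degree_0_id[symmetric])
  have "lead_coeff h * 1 = lead_coeff h * (coeff g 0 * t)"
    using lc f(1) \<open>degree g = 0\<close> by (simp add: lead_coeff_mult mult.assoc)
  then have "coeff g 0 * t = 1" using \<open>h \<noteq> 0\<close> by (metis mult_left_cancel leading_coeff_0_iff)
  then have "g * [:t:] = 1" by (subst g) (simp add: one_pCons mult.commute)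
  then show ?thesis using f(1) by (metis mult.assoc mult.right_neutral)
qed

lemma ACCP_poly_semidomain:
  assumes S: "semidomain S" and "ACCP S"
  shows "ACCP (poly_semidomain S)"
  unfolding ACCP_iff[OF mult_submonoid_poly_semidomain[OF S]]
proof (intro allI impI)
  let ?P = "poly_semidomain S"
  fix f assume "(\<forall>i. f i \<in> ?P - {0}) \<and> (\<forall>i. f i \<in> pideal ?P (f (Suc i)))"
  then have f: "\<And>i. f i \<in> ?P - {0}" and chain: "\<forall>i. f i \<in> pideal ?P (f (Suc i))" by blast+
  have quotient: "\<exists>g\<in>?P - {0}. f i = f (Suc i) * g" for i
    using chain by (auto simp: pideal_iff)
  have "degree (f (Suc i)) \<le> degree (f i)" for i
  proof -
    obtain g where "g \<noteq> 0" "f i = f (Suc i) * g" using quotient by blast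
    then show ?thesis using f[of "Suc i"] by (simp add: degree_mult_eq)
  qed
  then obtain M where M: "\<forall>n\<ge>M. degree (f n) = degree (f M)"
    using antimono_nat_eventually_const[of "\<lambda>i. degree (f i)"] by blast
  define c where "c i = lead_coeff (f (M + i))" for i
  have "c i \<in> S - {0}" for i
    using f[of "M + i"] by (auto simp: c_def poly_semidomain_def)
  moreover have "c i \<in> pideal S (c (Suc i))" for i
    using quotient[of "M + i"] by (auto simp: c_def pideal_iff lead_coeff_mult poly_semidomain_def)
  ultimately obtain N where N: "\<forall>j\<ge>N. c j \<in> pideal S (c N)"
    using \<open>ACCP S\<close> unfolding ACCP_iff[OF semidomain_imp_mult_submonoid[OF S]] by blast
  show "\<exists>K. \<forall>n\<ge>K. f n \<in> pideal ?P (f K)"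
  proof (intro exI allI impI)
    fix n assume "M + N \<le> n"
    define j where "j = n - M"
    have n: "n = M + j" and "N \<le> j" using \<open>M + N \<le> n\<close> by (simp_all add: j_def)
    obtain t where t: "t \<in> S - {0}" "c j = c N * t"
      using N \<open>N \<le> j\<close> unfolding pideal_iff by blast
    have "f (M + N) \<in> pideal ?P (f n)"
      using pideal_chain_mono[OF mult_submonoid_poly_semidomain[OF S] chain \<open>M + N \<le> n\<close>]
        pideal_subset_iff[OF mult_submonoid_poly_semidomain[OF S]] by blast
    then obtain g where "f (M + N) = f n * g" by (auto simp: pideal_iff)
    moreover have "degree (f (M + N)) = degree (f n)"
      using M \<open>M + N \<le> n\<close> by (metis le_add1 order_trans)
    moreover have "lead_coeff (f n) = lead_coeff (f (M + N)) * t"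
      using t(2) by (simp add: c_def n)
    ultimately have "f n = f (M + N) * [:t:]"
      using f by (intro eq_mult_const_if_degree_eq) auto
    then show "f n \<in> pideal ?P (f (M + N))"
      using t const_in_poly_semidomain[OF S] unfolding pideal_iff by (intro bexI[of _ "[:t:]"]) auto
  qed
qed

lemma ACCP_of_ACCP_poly_semidomain:
  assumes S: "semidomain S" and "ACCP (poly_semidomain S)"
  shows "ACCP S"
proof (rule ACCP_pullback[where \<phi> = "\<lambda>c. [:c:]"])
  show "mult_submonoid S" "mult_submonoid (poly_semidomain S)"
    using S by (simp_all add: semidomain_imp_mult_submonoid mult_submonoid_poly_semidomain)
  show "[:a:] \<in> poly_semidomain S - {0}" if "a \<in> S - {0}" for a
    using that const_in_poly_semidomain[OF S] by simp
  show "[:a:] \<in> pideal (poly_semidomain S) [:b:]" if a: "a \<in> pideal S b" for a b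
  proof -
    obtain s where "s \<in> S - {0}" "a = b * s" using a by (auto simp: pideal_iff)
    then show ?thesis
      using const_in_poly_semidomain[OF S] by (auto simp: pideal_iff intro!: bexI[of _ "[:s:]"])
  qed
  show "a \<in> pideal S b"
    if a: "a \<in> S - {0}" and dvd: "[:a:] \<in> pideal (poly_semidomain S) [:b:]" for a b
  proof -
    obtain g where g: "g \<in> poly_semidomain S" "[:a:] = [:b:] * g"
      using dvd by (auto simp: pideal_iff)
    then have "a = b * coeff g 0" by (metis coeff_mult_0 coeff_pCons_0)
    then show ?thesis using a g(1) by (auto simp: pideal_iff poly_semidomain_def)
  qed
qed (fact assms)

subsection \<open>Laurent polynomials\<close>

unbundle fps_syntax

text \<open>\<open>laurent_of_poly k p\<close> is \<open>x\<^sup>k p(x)\<close>.\<close>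

definition laurent_of_poly :: "int \<Rightarrow> 'a::idom poly \<Rightarrow> 'a fls" where
  "laurent_of_poly k p = fls_shift (-k) (fps_to_fls (fps_of_poly p))"

lemma laurent_of_poly_nth:
  "laurent_of_poly k p $$ n = (if n < k then 0 else coeff p (nat (n - k)))"
  by (simp add: laurent_of_poly_def)

lemma laurent_of_poly_mult:
  "laurent_of_poly k p * laurent_of_poly m q = laurent_of_poly (k + m) (p * q)"
  by (simp add: laurent_of_poly_def fls_times_both_shifted_simp fls_times_fps_to_fls
      fps_of_poly_mult add.commute)

lemma laurent_of_poly_eq_0_iff: "laurent_of_poly k p = 0 \<longleftrightarrow> p = 0"
  by (simp add: laurent_of_poly_def fls_shift_eq0_iff)

lemma laurent_of_poly_in_laurent_semidomain:
  assumes S: "semidomain S" and p: "p \<in> poly_semidomain S"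
  shows "laurent_of_poly k p \<in> laurent_semidomain S"
proof -
  have "{n. laurent_of_poly k p $$ n \<noteq> 0} \<subseteq> (\<lambda>i. int i + k) ` {..degree p}"
  proof
    fix n assume "n \<in> {n. laurent_of_poly k p $$ n \<noteq> 0}"
    then have "\<not> n < k" "coeff p (nat (n - k)) \<noteq> 0"
      by (auto simp: laurent_of_poly_nth split: if_splits)
    then show "n \<in> (\<lambda>i. int i + k) ` {..degree p}"
      by (intro image_eqI[of _ _ "nat (n - k)"]) (auto simp: le_degree)
  qed
  then have "finite {n. laurent_of_poly k p $$ n \<noteq> 0}" by (rule finite_subset) simp
  moreover have "laurent_of_poly k p $$ n \<in> S" for n
    using p S by (auto simp: laurent_of_poly_nth poly_semidomain_def semidomain_def)
  ultimately show ?thesis by (simp add: laurent_semidomain_def)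
qed

text \<open>For a Laurent polynomial \<open>F \<noteq> 0\<close> this is the \<open>p\<close> with \<open>p(0) \<noteq> 0\<close> in \<open>F = x\<^sup>k p(x)\<close>;
  for series of infinite support \<open>Abs_poly\<close> yields a junk value.\<close>

definition base_poly :: "'a::idom fls \<Rightarrow> 'a poly" where
  "base_poly F = Abs_poly (\<lambda>i. fls_base_factor_to_fps F $ i)"

lemma coeff_base_poly:
  assumes "F \<in> laurent_semidomain S"
  shows "coeff (base_poly F) i = F $$ (int i + fls_subdegree F)"
proof -
  have "{i. F $$ (int i + fls_subdegree F) \<noteq> 0} = (\<lambda>i. int i + fls_subdegree F) -` {n. F $$ n \<noteq> 0}"
    by auto
  also have "finite \<dots>"
    using assms by (intro finite_vimageI) (auto simp: laurent_semidomain_def inj_def)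
  finally have "\<forall>\<^sub>\<infinity>i. fls_base_factor_to_fps F $ i = 0"
    by (simp add: MOST_iff_cofinite fls_base_factor_to_fps_nth)
  then show ?thesis
    by (simp add: base_poly_def Abs_poly_inverse fls_base_factor_to_fps_nth)
qed

lemma fps_of_base_poly:
  "F \<in> laurent_semidomain S \<Longrightarrow> fps_of_poly (base_poly F) = fls_base_factor_to_fps F"
  by (simp add: fps_eq_iff coeff_base_poly fls_base_factor_to_fps_nth)

lemma laurent_of_poly_base_poly:
  assumes "F \<in> laurent_semidomain S"
  shows "laurent_of_poly (fls_subdegree F) (base_poly F) = F"
  using fls_conv_base_factor_to_fps_shift_subdegree[of F]
  by (simp add: laurent_of_poly_def fps_of_base_poly[OF assms])

lemma base_poly_in_poly_semidomain:
  "F \<in> laurent_semidomain S \<Longrightarrow> base_poly F \<in> poly_semidomain S"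
  using coeff_base_poly[of F S] by (simp add: poly_semidomain_def laurent_semidomain_def)

lemma base_poly_eq_0_iff:
  assumes "F \<in> laurent_semidomain S"
  shows "base_poly F = 0 \<longleftrightarrow> F = 0"
proof -
  have "base_poly F = 0 \<longleftrightarrow> fls_base_factor_to_fps F = 0"
    using fps_of_base_poly[OF assms] by (metis fps_of_poly_0 fps_of_poly_eq_iff)
  then show ?thesis by (cases "F = 0") (auto dest: fls_base_factor_to_fps_nonzero)
qed

lemma mult_submonoid_laurent_semidomain:
  assumes S: "semidomain S"
  shows "mult_submonoid (laurent_semidomain S)"
proof -
  have "1 \<in> laurent_semidomain S"
    using laurent_of_poly_in_laurent_semidomain[OF S const_in_poly_semidomain[of S 1], of 0] S
    by (simp add: laurent_of_poly_def semidomain_def one_pCons)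
  moreover have "F * G \<in> laurent_semidomain S"
    if "F \<in> laurent_semidomain S" "G \<in> laurent_semidomain S" for F G
    using laurent_of_poly_mult[of "fls_subdegree F" "base_poly F" "fls_subdegree G" "base_poly G"]
      laurent_of_poly_in_laurent_semidomain[OF S poly_semidomain_mult[OF S]]
      base_poly_in_poly_semidomain laurent_of_poly_base_poly that
    by metis
  ultimately show ?thesis by (simp add: mult_submonoid_def)
qed

lemma base_poly_mult:
  assumes S: "semidomain S" and "F \<in> laurent_semidomain S" "G \<in> laurent_semidomain S"
  shows "base_poly (F * G) = base_poly F * base_poly G"
proof -
  have "F * G \<in> laurent_semidomain S"
    using assms mult_submonoid_laurent_semidomain[OF S] by (simp add: mult_submonoid_def)
  then have "fps_of_poly (base_poly (F * G)) = fps_of_poly (base_poly F * base_poly G)"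
    using assms by (simp only: fps_of_poly_mult fps_of_base_poly fls_base_factor_to_fps_mult)
  then show ?thesis by (simp only: fps_of_poly_eq_iff)
qed

lemma fls_const_in_laurent_semidomain:
  assumes "semidomain S" "c \<in> S"
  shows "fls_const c \<in> laurent_semidomain S"
proof -
  have "{n. fls_const c $$ n \<noteq> 0} \<subseteq> {0}" by auto
  then have "finite {n. fls_const c $$ n \<noteq> 0}" by (rule finite_subset) simp
  then show ?thesis using assms by (simp add: laurent_semidomain_def semidomain_def)
qed

lemma ACCP_laurent_semidomain:
  assumes S: "semidomain S" and "ACCP (poly_semidomain S)"
  shows "ACCP (laurent_semidomain S)"
proof (rule ACCP_pullback[where \<phi> = base_poly])
  let ?L = "laurent_semidomain S" and ?P = "poly_semidomain S"
  show "mult_submonoid ?L" "mult_submonoid ?P"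
    using S by (simp_all add: mult_submonoid_laurent_semidomain mult_submonoid_poly_semidomain)
  show "base_poly F \<in> ?P - {0}" if "F \<in> ?L - {0}" for F
    using that base_poly_eq_0_iff[of F S] by (simp add: base_poly_in_poly_semidomain)
  show "base_poly F \<in> pideal ?P (base_poly G)" if F: "F \<in> pideal ?L G" and "G \<in> ?L - {0}" for F G
  proof -
    obtain H where "H \<in> ?L - {0}" "F = G * H" using F by (auto simp: pideal_iff)
    then show ?thesis
      using \<open>G \<in> ?L - {0}\<close> by (auto simp: pideal_iff base_poly_mult[OF S] base_poly_eq_0_iff
          intro!: bexI[of _ "base_poly H"] base_poly_in_poly_semidomain)
  qed
  show "F \<in> pideal ?L G"
    if "F \<in> ?L - {0}" "G \<in> ?L - {0}" and dvd: "base_poly F \<in> pideal ?P (base_poly G)" for F G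
  proof -
    obtain h where h: "h \<in> ?P - {0}" "base_poly F = base_poly G * h"
      using dvd by (auto simp: pideal_iff)
    define k where "k = fls_subdegree F - fls_subdegree G"
    have "F = laurent_of_poly (fls_subdegree F) (base_poly F)"
      using laurent_of_poly_base_poly[of F S] that(1) by simp
    also have "\<dots> = laurent_of_poly (fls_subdegree G) (base_poly G) * laurent_of_poly k h"
      by (simp add: laurent_of_poly_mult k_def h(2))
    also have "\<dots> = G * laurent_of_poly k h"
      using laurent_of_poly_base_poly[of G S] that(2) by simp
    finally have "F = G * laurent_of_poly k h" .
    moreover have "laurent_of_poly k h \<in> ?L - {0}"
      using h(1) by (simp add: laurent_of_poly_in_laurent_semidomain[OF S] laurent_of_poly_eq_0_iff)
    ultimately show ?thesis by (auto simp: pideal_iff)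
  qed
qed (fact assms)

lemma ACCP_of_ACCP_laurent_semidomain:
  assumes S: "semidomain S" and "ACCP (laurent_semidomain S)"
  shows "ACCP S"
proof (rule ACCP_pullback[where \<phi> = fls_const])
  show "mult_submonoid S" "mult_submonoid (laurent_semidomain S)"
    using S by (simp_all add: semidomain_imp_mult_submonoid mult_submonoid_laurent_semidomain)
  show "fls_const a \<in> laurent_semidomain S - {0}" if "a \<in> S - {0}" for a
    using that fls_const_in_laurent_semidomain[OF S] by (simp add: fls_const_nonzero)
  show "fls_const a \<in> pideal (laurent_semidomain S) (fls_const b)" if a: "a \<in> pideal S b" for a b
  proof -
    obtain s where "s \<in> S - {0}" "a = b * s" using a by (auto simp: pideal_iff)
    then show ?thesis
      using fls_const_in_laurent_semidomain[OF S]
      by (auto simp: pideal_iff fls_const_nonzero intro!: bexI[of _ "fls_const s"])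
  qed
  show "a \<in> pideal S b"
    if a: "a \<in> S - {0}" and dvd: "fls_const a \<in> pideal (laurent_semidomain S) (fls_const b)" for a b
  proof -
    obtain G where G: "G \<in> laurent_semidomain S" "fls_const a = fls_const b * G"
      using dvd by (auto simp: pideal_iff)
    have "a = b * G $$ 0" using arg_cong[OF G(2), of "\<lambda>F. F $$ 0"] by simp
    then show ?thesis using a G(1) by (auto simp: pideal_iff laurent_semidomain_def)
  qed
qed (fact assms)

theorem theorem3p3:
  fixes S :: "'a::idom set"
  assumes "semidomain S"
  shows "(ACCP S \<longleftrightarrow> ACCP (poly_semidomain S))
       \<and> (ACCP (poly_semidomain S) \<longleftrightarrow> ACCP (laurent_semidomain S))"
  using ACCP_poly_semidomain[OF assms] ACCP_of_ACCP_poly_semidomain[OF assms]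
    ACCP_laurent_semidomain[OF assms] ACCP_of_ACCP_laurent_semidomain[OF assms]
  by blast

end
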